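(* Let $G$ be a finite group and $q$ a prime divisor of $|G|$. Let $Q\in{\rm Syl}_q(G)$ with $|Q|=q^m$, $m\geq 1$. If $Q$ is cyclic and $G$ has exactly $t$ Sylow $q$-subgroups, then $|F_{q^m}(G)|\geq q^m+(t-1)(q^m-q^{m-1})$.
   Context: For a finite group $G$ and a positive integer $n$, $F_n(G)=\{g\in G\mid g^n=1\}$. *)

theory Defs
  imports "HOL-Algebra.Algebra" "HOL-Computational_Algebra.Primes"
begin

definition Syl :: "('a, 'b) monoid_scheme \<Rightarrow> nat \<Rightarrow> 'a set set" where
  "Syl G q = {Q. subgroup Q G \<and> card Q = q ^ multiplicity q (order G)}"

definition Fn :: "('a, 'b) monoid_scheme \<Rightarrow> nat \<Rightarrow> 'a set" where
  "Fn G n = {g \<in> carrier G. g [^]\<^bsub>G\<^esub> n = \<one>\<^bsub>G\<^esub>}"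

end

theory Submission
  imports Defs
begin

(* Every Sylow q-subgroup P is conjugated into Q: P acts on the right cosets of Q, a set of
   size prime to q, so some coset Q g is fixed and then g P g\<inverse> \<subseteq> Q. Conjugation therefore
   embeds the solutions of x^(q^(m-1)) = 1 in P into those in the cyclic group Q, of which there
   are only q^(m-1). The other q^m - q^(m-1) elements of P have order q^m, so each generates P
   and lies in no other Sylow q-subgroup. Counting Q together with these generators of the
   remaining t - 1 Sylow subgroups, all inside F_(q^m)(G), gives the bound. *)

lemma (in monoid) Fn_subgroup: "Fn (G\<lparr>carrier := H\<rparr>) n = {x \<in> H. x [^] n = \<one>}"
  by (simp add: Fn_def nat_pow_consistent[symmetric])

lemma (in group) subgroup_subset_Fn_card:
  assumes H: "subgroup H G" and fin: "finite H"
  shows "H \<subseteq> Fn G (card H)"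
proof
  fix x assume x: "x \<in> H"
  interpret H: group "G\<lparr>carrier := H\<rparr>"
    using subgroup.subgroup_is_group[OF H is_group] .
  have "x [^] card H = \<one>"
    using H.pow_order_eq_1[of x] x fin by (simp add: order_def nat_pow_consistent[symmetric])
  then show "x \<in> Fn G (card H)" using x subgroup.subset[OF H] by (auto simp: Fn_def)
qed

lemma (in group) card_Fn_le_of_cyclic:
  assumes cyc: "cyclic_group G" and fin: "finite (carrier G)" and d: "d dvd order G"
  shows "card (Fn G d) \<le> d"
proof -
  obtain x where x: "x \<in> carrier G" and gen: "subgroup_generated G {x} = G"
    using cyc unfolding cyclic_group_def by blast
  have gen_x: "generate G {x} = carrier G"
    using arg_cong[OF gen, of carrier] x by (simp add: carrier_subgroup_generated)
  then have ord_x: "ord x = order G"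
    using generate_pow_card[OF x] by (simp add: order_def)
  obtain e where e: "order G = d * e" using d by blast
  have d_pos: "d > 0" using e fin order_gt_0_iff_finite by (metis mult_is_0 not_gr0)
  have "Fn G d \<subseteq> (\<lambda>j. x [^] (e * j)) ` {..<d}"
  proof
    fix y assume y: "y \<in> Fn G d"
    then have "y \<in> {x [^] r | r. r \<in> {0..ord x - 1}}"
      using ord_elems[OF fin x] generate_pow_on_finite_carrier[OF fin x] gen_x
      unfolding Fn_def by auto
    then obtain r where r: "r \<in> {0..ord x - 1}" "y = x [^] r" by blast
    have r_lt: "r < ord x" using r(1) ord_ge_1[OF fin x] by auto
    have "x [^] (d * r) = \<one>" using y r x by (simp add: Fn_def nat_pow_pow mult.commute)
    then have "d * e dvd d * r" using pow_eq_id[OF x] ord_x e by simp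
    then obtain j where j: "r = e * j" using d_pos by auto
    have "j < d" using r_lt j ord_x e by (simp add: mult.commute)
    then show "y \<in> (\<lambda>j. x [^] (e * j)) ` {..<d}" using r j by blast
  qed
  then have "card (Fn G d) \<le> card ((\<lambda>j. x [^] (e * j)) ` {..<d})"
    by (intro card_mono) auto
  also have "\<dots> \<le> d" using card_image_le[of "{..<d}"] by simp
  finally show ?thesis .
qed

lemma (in group) generate_eq_of_pow_ne_one:
  assumes p: "Factorial_Ring.prime p" and H: "subgroup H G" "finite H" "card H = p ^ m"
    and x: "x \<in> H" "x [^] p ^ (m - 1) \<noteq> \<one>"
  shows "generate G {x} = H"
proof -
  have xG: "x \<in> carrier G" using x subgroup.subset[OF H(1)] by blast
  have "ord x dvd p ^ m"
    using subgroup_subset_Fn_card[OF H(1,2)] x H(3) pow_eq_id[OF xG] by (auto simp: Fn_def)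
  then obtain i where i: "i \<le> m" "ord x = p ^ i"
    using divides_primepow_nat[OF p] by auto
  have "i = m"
  proof (rule ccontr)
    assume "i \<noteq> m"
    then have "ord x dvd p ^ (m - 1)" using i by (simp add: le_imp_power_dvd)
    then show False using pow_eq_id[OF xG] x(2) by simp
  qed
  then have "card (generate G {x}) = card H"
    using generate_pow_card[OF xG] i H(3) by simp
  moreover have "generate G {x} \<subseteq> H"
    using generate_subgroup_incl[OF _ H(1)] x(1) by blast
  ultimately show ?thesis using card_subset_eq[OF H(2)] by blast
qed

lemma (in group) conjugation_hom:
  assumes "g \<in> carrier G"
  shows "(\<lambda>x. g \<otimes> x \<otimes> inv g) \<in> hom G G"
  by (rule homI) (use assms in \<open>auto simp add: m_assoc inv_solve_left\<close>)

lemma (in group) card_Fn_le_of_conj_subset: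
  assumes g: "g \<in> carrier G" and P: "P \<subseteq> carrier G" and H: "finite H"
    and conj: "\<forall>x\<in>P. g \<otimes> x \<otimes> inv g \<in> H"
  shows "card (Fn (G\<lparr>carrier := P\<rparr>) n) \<le> card (Fn (G\<lparr>carrier := H\<rparr>) n)"
  unfolding Fn_subgroup
proof (rule card_inj_on_le[where f = "\<lambda>x. g \<otimes> x \<otimes> inv g"])
  show "inj_on (\<lambda>x. g \<otimes> x \<otimes> inv g) {x \<in> P. x [^] n = \<one>}"
    using P g by (auto intro: inj_onI conjugation_is_inj)
  have "(g \<otimes> x \<otimes> inv g) [^] n = g \<otimes> x [^] n \<otimes> inv g" if "x \<in> P" for x
    using hom_nat_pow[OF conjugation_hom[OF g]] that P is_group by auto
  then show "(\<lambda>x. g \<otimes> x \<otimes> inv g) ` {x \<in> P. x [^] n = \<one>} \<subseteq> {y \<in> H. y [^] n = \<one>}"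
    using conj g by auto
  show "finite {y \<in> H. y [^] n = \<one>}" using H by simp
qed

lemma (in group) rcosets_action:
  assumes H: "subgroup H G"
  shows "group_action G (rcosets H) (\<lambda>g. \<lambda>Y \<in> rcosets H. Y #> inv g)"
proof -
  let ?\<phi> = "\<lambda>g. \<lambda>Y \<in> rcosets H. Y #> inv g"
  have closed: "Y #> a \<in> rcosets H" if "Y \<in> rcosets H" "a \<in> carrier G" for Y a
    using that subgroup.subset[OF H] by (auto simp: RCOSETS_def coset_mult_assoc)
  have YG: "Y \<subseteq> carrier G" if "Y \<in> rcosets H" for Y
    using subgroup.rcosets_carrier[OF H is_group that] .
  have bij: "?\<phi> g \<in> Bij (rcosets H)" if g: "g \<in> carrier G" for g
  proof -
    have "bij_betw (?\<phi> g) (rcosets H) (rcosets H)"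
    proof (rule bij_betwI[where g = "\<lambda>Y. Y #> g"])
      show "(\<lambda>Y. Y #> g) \<in> rcosets H \<rightarrow> rcosets H" "?\<phi> g \<in> rcosets H \<rightarrow> rcosets H"
        using closed g by auto
      show "?\<phi> g Y #> g = Y" "?\<phi> g (Y #> g) = Y" if "Y \<in> rcosets H" for Y
        using that g YG[OF that] closed by (simp_all add: coset_mult_assoc)
    qed
    then show ?thesis unfolding Bij_def by auto
  qed
  have "?\<phi> \<in> hom G (BijGroup (rcosets H))"
  proof (rule homI)
    show "?\<phi> g \<in> carrier (BijGroup (rcosets H))" if "g \<in> carrier G" for g
      using bij[OF that] by (simp add: BijGroup_def)
    show "?\<phi> (g \<otimes> h) = ?\<phi> g \<otimes>\<^bsub>BijGroup (rcosets H)\<^esub> ?\<phi> h"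
      if "g \<in> carrier G" "h \<in> carrier G" for g h
      using that bij[OF that(1)] bij[OF that(2)] closed YG
      by (auto simp: BijGroup_def compose_def fun_eq_iff inv_mult_group coset_mult_assoc)
  qed
  then show ?thesis
    unfolding group_action_def group_hom_def group_hom_axioms_def
    using is_group group_BijGroup by auto
qed

lemma (in group_action) fixed_point_of_prime_power_order:
  assumes E: "finite E" and p: "Factorial_Ring.prime p" and ord_G: "order G = p ^ k"
    and not_dvd: "\<not> p dvd card E"
  shows "\<exists>x\<in>E. \<forall>g\<in>carrier G. \<phi> g x = x"
proof (rule ccontr)
  assume no_fixed: "\<not> ?thesis"
  have orbit_dvd: "p dvd card (orbit G \<phi> x)" if x: "x \<in> E" for x
  proof -
    have "card (orbit G \<phi> x) dvd p ^ k"
      using orbit_stabilizer_theorem[OF x] ord_G by (metis dvd_triv_left)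
    then obtain i where i: "card (orbit G \<phi> x) = p ^ i"
      using divides_primepow_nat[OF p] by auto
    have "orbit G \<phi> x \<noteq> {x}"
      using no_fixed x unfolding orbit_def by blast
    then have "card (orbit G \<phi> x) \<noteq> 1"
      using orbit_refl[OF x] by (auto simp: card_1_singleton_iff)
    then show ?thesis using i by (cases i) auto
  qed
  have "p dvd (\<Sum>orb\<in>orbits G E \<phi>. card orb)"
    by (rule dvd_sum) (use orbit_dvd in \<open>auto simp: orbits_def\<close>)
  also have "(\<Sum>orb\<in>orbits G E \<phi>. card orb) = (\<Sum>orb\<in>orbits G E \<phi>. \<Sum>x\<in>orb. 1)"
    by simp
  also have "\<dots> = (\<Sum>x\<in>E. 1)"
    by (rule disjoint_sum[OF E])
  also have "\<dots> = card E"
    by simp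
  finally show False using not_dvd by simp
qed

lemma (in group) conj_subset_of_index_not_dvd:
  assumes fin: "finite (carrier G)" and p: "Factorial_Ring.prime p"
    and P: "subgroup P G" "card P = p ^ k"
    and H: "subgroup H G" "\<not> p dvd card (rcosets H)"
  shows "\<exists>g\<in>carrier G. \<forall>x\<in>P. g \<otimes> x \<otimes> inv g \<in> H"
proof -
  interpret action: group_action "G\<lparr>carrier := P\<rparr>" "rcosets H" "\<lambda>g. \<lambda>Y \<in> rcosets H. Y #> inv g"
    using group_action.induced_action[OF rcosets_action[OF H(1)] P(1)] .
  have "finite (rcosets H)"
    using fin rcosets_subset_PowG[OF H(1)] by (meson finite_Pow_iff finite_subset)
  then obtain Y where Y: "Y \<in> rcosets H" and fixed: "\<forall>x\<in>P. Y #> inv x = Y"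
    using action.fixed_point_of_prime_power_order[OF _ p _ H(2)] P(2) by (force simp: order_def)
  obtain g where g: "g \<in> carrier G" and Y_eq: "Y = H #> g"
    using Y by (auto simp: RCOSETS_def)
  have "g \<otimes> x \<otimes> inv g \<in> H" if x: "x \<in> P" for x
  proof -
    have xG: "x \<in> carrier G" using x subgroup.subset[OF P(1)] by blast
    have "H #> (g \<otimes> x) = H #> g"
      using fixed subgroup.m_inv_closed[OF P(1) x] xG g Y_eq subgroup.subset[OF H(1)]
      by (metis coset_mult_assoc inv_inv)
    then have "g \<otimes> x \<in> H #> g"
      using rcos_self[OF _ H(1)] g xG by (metis m_closed)
    then show ?thesis
      using subgroup.rcos_module_imp[OF H(1) is_group g] by blast
  qed
  then show ?thesis using g by blast
qed

lemma (in group) index_Syl_not_dvd: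
  assumes fin: "finite (carrier G)" and p: "Factorial_Ring.prime p" and P: "P \<in> Syl G p"
  shows "\<not> p dvd card (rcosets P)"
proof -
  have sub: "subgroup P G" and card: "card P = p ^ multiplicity p (order G)"
    using P unfolding Syl_def by auto
  have "card (rcosets P) = order G div p ^ multiplicity p (order G)"
    using lagrange[OF sub] card p by (metis nonzero_mult_div_cancel_right power_not_zero not_prime_0)
  moreover have "order G \<noteq> 0" using fin order_gt_0_iff_finite by blast
  moreover have "\<not> is_unit p" using p not_prime_unit by blast
  ultimately show ?thesis using multiplicity_decompose by metis
qed

lemma (in group) card_Syl_pow_ne_one_ge:
  assumes fin: "finite (carrier G)" and q: "Factorial_Ring.prime q"
    and Q: "Q \<in> Syl G q" "card Q = q ^ m" "cyclic_group (G\<lparr>carrier := Q\<rparr>)"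
    and P: "P \<in> Syl G q"
  shows "q ^ m - q ^ (m - 1) \<le> card {x \<in> P. x [^] q ^ (m - 1) \<noteq> \<one>}"
proof -
  have subP: "subgroup P G" "card P = q ^ m" and subQ: "subgroup Q G"
    using P Q(1,2) unfolding Syl_def by auto
  have finP: "finite P" and finQ: "finite Q"
    using fin subgroup.subset[OF subP(1)] subgroup.subset[OF subQ] finite_subset by blast+
  obtain g where g: "g \<in> carrier G" "\<forall>x\<in>P. g \<otimes> x \<otimes> inv g \<in> Q"
    using conj_subset_of_index_not_dvd[OF fin q subP subQ index_Syl_not_dvd[OF fin q Q(1)]] by blast
  interpret Q: group "G\<lparr>carrier := Q\<rparr>"
    using subgroup.subgroup_is_group[OF subQ is_group] .
  have "card (Fn (G\<lparr>carrier := P\<rparr>) (q ^ (m - 1))) \<le> card (Fn (G\<lparr>carrier := Q\<rparr>) (q ^ (m - 1)))"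
    using card_Fn_le_of_conj_subset[OF g(1) subgroup.subset[OF subP(1)] finQ g(2)] .
  also have "\<dots> \<le> q ^ (m - 1)"
    using Q.card_Fn_le_of_cyclic[OF Q(3)] finQ Q(2) by (simp add: order_def le_imp_power_dvd)
  finally have "card {x \<in> P. x [^] q ^ (m - 1) = \<one>} \<le> q ^ (m - 1)"
    by (simp add: Fn_subgroup)
  moreover have "{x \<in> P. x [^] q ^ (m - 1) \<noteq> \<one>} = P - {x \<in> P. x [^] q ^ (m - 1) = \<one>}"
    by blast
  ultimately show ?thesis
    using card_Diff_subset[of "{x \<in> P. x [^] q ^ (m - 1) = \<one>}" P] finP subP(2) by auto
qed

lemma card_Union_ge_by_exclusive_parts:
  assumes fin: "finite \<A>" and Q: "Q \<in> \<A>" and fin_A: "\<And>A. A \<in> \<A> \<Longrightarrow> finite A"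
    and S_sub: "\<And>A. A \<in> \<A> \<Longrightarrow> S A \<subseteq> A" and S_card: "\<And>A. A \<in> \<A> \<Longrightarrow> c \<le> card (S A)"
    and exclusive: "\<And>A B. A \<in> \<A> \<Longrightarrow> B \<in> \<A> \<Longrightarrow> A \<noteq> B \<Longrightarrow> S A \<inter> B = {}"
  shows "card Q + (card \<A> - 1) * c \<le> card (\<Union>\<A>)"
proof -
  let ?others = "\<Union>A\<in>\<A> - {Q}. S A"
  have fin_S: "finite (S A)" if "A \<in> \<A>" for A
    using finite_subset[OF S_sub fin_A] that by simp
  have pairwise: "S A \<inter> S B = {}" if "A \<in> \<A>" "B \<in> \<A>" "A \<noteq> B" for A B
    using exclusive[OF that] S_sub[OF that(2)] by blast
  have "(card \<A> - 1) * c = (\<Sum>A\<in>\<A> - {Q}. c)"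
    using Q fin by (simp add: card_Diff_singleton)
  also have "\<dots> \<le> (\<Sum>A\<in>\<A> - {Q}. card (S A))"
    using S_card by (intro sum_mono) auto
  also have "\<dots> = card ?others"
    using fin fin_S pairwise by (intro card_UN_disjoint[symmetric]) auto
  finally have "(card \<A> - 1) * c \<le> card ?others" .
  moreover have "card (Q \<union> ?others) = card Q + card ?others"
  proof (rule card_Un_disjoint)
    show "finite Q" "finite ?others" using fin_A[OF Q] fin fin_S by auto
    show "Q \<inter> ?others = {}" using exclusive[OF _ Q] by blast
  qed
  moreover have "card (Q \<union> ?others) \<le> card (\<Union>\<A>)"
    using Q S_sub fin fin_A by (intro card_mono) auto
  ultimately show ?thesis by linarith
qed

lemma finite_Syl: "finite (carrier G) \<Longrightarrow> finite (Syl G p)"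
  unfolding Syl_def by (rule finite_subset[of _ "Pow (carrier G)"]) (auto dest: subgroup.subset)

lemma (in group) Syl_eq_of_pow_ne_one:
  assumes fin: "finite (carrier G)" and q: "Factorial_Ring.prime q"
    and A: "A \<in> Syl G q" "card A = q ^ m" and B: "B \<in> Syl G q"
    and x: "x \<in> A" "x [^] q ^ (m - 1) \<noteq> \<one>" "x \<in> B"
  shows "A = B"
proof -
  have sub: "subgroup A G" "subgroup B G" and card: "card B = card A"
    using A B unfolding Syl_def by auto
  have finB: "finite B" using fin subgroup.subset[OF sub(2)] finite_subset by blast
  have "A = generate G {x}"
    using generate_eq_of_pow_ne_one[OF q sub(1) _ A(2) x(1,2)] finite_subset[OF subgroup.subset[OF sub(1)] fin]
    by simp
  also have "\<dots> \<subseteq> B"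
    using generate_subgroup_incl[OF _ sub(2)] x(3) by blast
  finally show ?thesis using card_subset_eq[OF finB] card by simp
qed

theorem lemma2p1:
  fixes G (structure) and q m t :: nat and Q :: "'a set"
  assumes "group G" and "finite (carrier G)"
    and "Factorial_Ring.prime q" and "q dvd order G"
    and "Q \<in> Syl G q" and "card Q = q ^ m" and "m \<ge> 1"
    and "cyclic_group (G\<lparr>carrier := Q\<rparr>)"
    and "card (Syl G q) = t"
  shows "card (Fn G (q ^ m)) \<ge> q ^ m + (t - 1) * (q ^ m - q ^ (m - 1))"
proof -
  interpret group G by fact
  have Syl: "subgroup P G" "finite P" "card P = q ^ m" if "P \<in> Syl G q" for P
  proof -
    show "subgroup P G" "card P = q ^ m" using that assms(5,6) unfolding Syl_def by auto
    then show "finite P" using subgroup.subset assms(2) finite_subset by blast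
  qed
  have "card Q + (card (Syl G q) - 1) * (q ^ m - q ^ (m - 1)) \<le> card (\<Union>(Syl G q))"
    by (rule card_Union_ge_by_exclusive_parts[where S = "\<lambda>P. {x \<in> P. x [^] q ^ (m - 1) \<noteq> \<one>}"])
      (use finite_Syl[OF assms(2)] assms(5) Syl(2) card_Syl_pow_ne_one_ge[OF assms(2,3,5,6,8)]
        Syl_eq_of_pow_ne_one[OF assms(2,3)] Syl(3) in blast)+
  also have "\<dots> \<le> card (Fn G (q ^ m))"
  proof (rule card_mono)
    show "finite (Fn G (q ^ m))" using assms(2) by (simp add: Fn_def)
    show "\<Union>(Syl G q) \<subseteq> Fn G (q ^ m)"
      using subgroup_subset_Fn_card[OF Syl(1,2)] Syl(3) by (metis Union_least)
  qed
  finally show ?thesis using assms(6,9) by simp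
qed

end
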